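(* Let $q\ge2$ and let $f$ be a $q$-regular sequence with a zero-insensitive minimal linear representation $(\mathbf{u},(M_i)_{0\le i<q},\mathbf{v})$, so that $f(n)=\mathbf{u}^t M_{n_0}M_{n_1}\cdots M_{n_L}\mathbf{v}$ where $n_L\cdots n_0$ is the $q$-ary expansion of $n$. Let $r$ be a nonnegative integer. Then the following are equivalent: (i) $f$ is $q$-quasimultiplicative with parameter $r$, i.e. $f(q^{k+r}a+b)=f(a)f(b)$ for all nonnegative integers $a,b,k$ with $0\le b<q^k$; (ii) $M_0^r=\mathbf{v}\mathbf{u}^t$.
   Context: A function $f$ on the nonnegative integers is $q$-regular if $f(n)=\mathbf{u}^t\mathbf{f}(n)$ for a vector $\mathbf{u}$ and a vector-valued function $\mathbf{f}$ for which there are square matrices $M_0,\dots,M_{q-1}$ with $\mathbf{f}(qn+i)=M_i\mathbf{f}(n)$ for all $0\le i<q$ and $qn+i>0$; set $\mathbf{v}=\mathbf{f}(0)$. Equivalently $f(n)=\mathbf{u}^t M_{n_0}M_{n_1}\cdots M_{n_L}\mathbf{v}$ for the $q$-ary expansion $n_L\cdots n_0$ of $n$. The triple $(\mathbf{u},(M_i)_{0\le i<q},\mathbf{v})$ is a linear representation of $f$; it is zero-insensitive if $M_0\mathbf{v}=\mathbf{v}$, and minimal if the dimension of the matrices is minimal among all linear representations of $f$. *)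

theory Defs
  imports "Jordan_Normal_Form.Matrix"
begin

function lr_vec :: "nat \<Rightarrow> (nat \<Rightarrow> 'a::comm_semiring_0 mat) \<Rightarrow> 'a vec \<Rightarrow> nat \<Rightarrow> 'a vec" where
  "lr_vec q M v n = (if n = 0 \<or> q < 2 then v else (M (n mod q)) *\<^sub>v (lr_vec q M v (n div q)))"
  by auto
termination
  by (relation "measure (\<lambda>(q, M, v, n). n)") auto

definition is_linrep :: "nat \<Rightarrow> (nat \<Rightarrow> 'a::comm_semiring_0) \<Rightarrow> nat \<Rightarrow> 'a vec \<Rightarrow> (nat \<Rightarrow> 'a mat) \<Rightarrow> 'a vec \<Rightarrow> bool" where
  "is_linrep q f d u M v \<longleftrightarrow>
     u \<in> carrier_vec d \<and> v \<in> carrier_vec d \<and> (\<forall>i<q. M i \<in> carrier_mat d d) \<and>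
     (\<forall>n. f n = u \<bullet> (lr_vec q M v n))"

definition minimal_linrep :: "nat \<Rightarrow> (nat \<Rightarrow> 'a::comm_semiring_0) \<Rightarrow> nat \<Rightarrow> 'a vec \<Rightarrow> (nat \<Rightarrow> 'a mat) \<Rightarrow> 'a vec \<Rightarrow> bool" where
  "minimal_linrep q f d u M v \<longleftrightarrow> is_linrep q f d u M v \<and>
     (\<forall>d' (u' :: 'a vec) M' v'. is_linrep q f d' u' M' v' \<longrightarrow> d \<le> d')"

definition zero_insensitive :: "(nat \<Rightarrow> 'a::comm_semiring_0 mat) \<Rightarrow> 'a vec \<Rightarrow> bool" where
  "zero_insensitive M v \<longleftrightarrow> M 0 *\<^sub>v v = v"

definition quasimultiplicative :: "nat \<Rightarrow> nat \<Rightarrow> (nat \<Rightarrow> 'a::times) \<Rightarrow> bool" where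
  "quasimultiplicative q r f \<longleftrightarrow>
     (\<forall>a b k. b < q ^ k \<longrightarrow> f (q ^ (k + r) * a + b) = f a * f b)"

definition outer_prod :: "'a::times vec \<Rightarrow> 'a vec \<Rightarrow> 'a mat" where
  "outer_prod v u = mat (dim_vec v) (dim_vec u) (\<lambda>(i, j). v $ i * u $ j)"

end

theory Submission
  imports Defs "Jordan_Normal_Form.VS_Connect"
begin

text \<open>Write x(a) = M_{a_0} \<cdots> M_{a_L} v (that is, lr_vec), so that f(a) = u^t x(a), and
  P_k(b) = M_{b_0} \<cdots> M_{b_{k-1}} (digit_prod) for the product over the k lowest digits of b < q^k.
  Zero-insensitivity gives f(q^(k+r) a + b) = u^t P_k(b) M_0^r x(a) and f(a) f(b) = u^t P_k(b) v u^t x(a),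
  so quasimultiplicativity says that the matrices M_0^r and v u^t agree when sandwiched between
  all vectors P_k(b)^t u and x(a). In a minimal representation both families span the whole
  space: a nonzero vector orthogonal to either family shows that its span is a proper invariant
  subspace, and restricting to that subspace (for the vectors P_k(b)^t u, after transposing)
  yields a representation of smaller dimension. Hence the two matrices are equal.\<close>

declare lr_vec.simps[simp del]

lemma lr_vec_carrier:
  assumes "v \<in> carrier_vec d" and "\<And>i. i < q \<Longrightarrow> M i \<in> carrier_mat d d"
  shows "lr_vec q M v n \<in> carrier_vec d"
proof (induction n rule: less_induct)
  case (less n)
  show ?case
  proof (cases "n = 0 \<or> q < 2")
    case True
    then show ?thesis using assms(1) by (subst lr_vec.simps) auto
  next
    case False
    then have "n mod q < q" "n div q < n" by auto
    then show ?thesis using False less assms(2)[of "n mod q"] by (subst lr_vec.simps) auto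
  qed
qed

lemma lr_vec_digit:
  assumes "q \<ge> 2" and "i < q" and "zero_insensitive M v"
  shows "lr_vec q M v (q * n + i) = M i *\<^sub>v lr_vec q M v n"
proof (cases "q * n + i = 0")
  case True
  then show ?thesis using assms by (subst (1 2) lr_vec.simps) (auto simp: zero_insensitive_def)
next
  case False
  have "(q * n + i) mod q = i" "(q * n + i) div q = n" using assms(1,2) by auto
  then show ?thesis using False assms(1) by (subst lr_vec.simps) auto
qed

lemma lr_vec_intertwine:
  fixes N N' :: "nat \<Rightarrow> 'a::comm_semiring_1 mat"
  assumes T: "T \<in> carrier_mat dy dx"
    and N: "\<And>i. i < q \<Longrightarrow> N i \<in> carrier_mat dx dx"
    and N': "\<And>i. i < q \<Longrightarrow> N' i \<in> carrier_mat dy dy"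
    and comm: "\<And>i. i < q \<Longrightarrow> T * N i = N' i * T"
    and x: "x \<in> carrier_vec dx"
  shows "lr_vec q N' (T *\<^sub>v x) n = T *\<^sub>v lr_vec q N x n"
proof (induction n rule: less_induct)
  case (less n)
  show ?case
  proof (cases "n = 0 \<or> q < 2")
    case True
    then show ?thesis by (subst (1 2) lr_vec.simps) auto
  next
    case False
    let ?i = "n mod q" and ?y = "lr_vec q N x (n div q)"
    have i: "?i < q" and "n div q < n" using False by auto
    have y: "?y \<in> carrier_vec dx" using lr_vec_carrier[OF x N] .
    have "lr_vec q N' (T *\<^sub>v x) n = N' ?i *\<^sub>v (T *\<^sub>v ?y)"
      using False less \<open>n div q < n\<close> by (subst lr_vec.simps) auto
    also have "\<dots> = (T * N ?i) *\<^sub>v ?y" using N'[OF i] T y comm[OF i] by simp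
    also have "\<dots> = T *\<^sub>v lr_vec q N x n"
      using N[OF i] T y False by (subst (2) lr_vec.simps) auto
    finally show ?thesis .
  qed
qed

fun digit_prod :: "nat \<Rightarrow> (nat \<Rightarrow> 'a::semiring_1 mat) \<Rightarrow> nat \<Rightarrow> nat \<Rightarrow> nat \<Rightarrow> 'a mat" where
  "digit_prod q M d 0 b = 1\<^sub>m d"
| "digit_prod q M d (Suc k) b = M (b mod q) * digit_prod q M d k (b div q)"

lemma digit_prod_carrier:
  assumes "q \<ge> 2" and "\<And>i. i < q \<Longrightarrow> M i \<in> carrier_mat d d"
  shows "digit_prod q M d k b \<in> carrier_mat d d"
proof (induction k arbitrary: b)
  case (Suc k)
  have "b mod q < q" using assms(1) by auto
  then show ?case using mult_carrier_mat[OF assms(2) Suc.IH] by simp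
qed simp

lemma pow_mat_Suc_left:
  assumes "A \<in> carrier_mat n n"
  shows "A * A ^\<^sub>m k = A ^\<^sub>m Suc k"
proof (induction k)
  case (Suc k)
  have "A * A ^\<^sub>m Suc k = (A * A ^\<^sub>m k) * A"
    using assoc_mult_mat[OF assms pow_carrier_mat[OF assms] assms] by simp
  then show ?case using Suc.IH by simp
qed (use assms in simp)

lemma digit_prod_zero:
  assumes "M 0 \<in> carrier_mat d d"
  shows "digit_prod q M d k 0 = M 0 ^\<^sub>m k"
  using assms by (induction k) (simp_all add: pow_mat_Suc_left)

lemma digit_prod_snoc:
  assumes q: "q \<ge> 2" and M: "\<And>i. i < q \<Longrightarrow> M i \<in> carrier_mat d d" and i: "i < q"
  shows "b < q ^ k \<Longrightarrow> digit_prod q M d k b * M i = digit_prod q M d (Suc k) (b + q ^ k * i)"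
proof (induction k arbitrary: b)
  case 0
  then show ?case using M[OF i] i by simp
next
  case (Suc k)
  have bm: "b mod q < q" using q by auto
  have "b div q < q ^ k" using Suc.prems q by (simp add: less_mult_imp_div_less mult.commute)
  moreover have "(b + q ^ Suc k * i) mod q = b mod q" "(b + q ^ Suc k * i) div q = b div q + q ^ k * i"
    using q by (simp_all add: mult.assoc)
  moreover have "digit_prod q M d (Suc k) b * M i = M (b mod q) * (digit_prod q M d k (b div q) * M i)"
    using assoc_mult_mat[OF M[OF bm] digit_prod_carrier[OF q M] M[OF i]] by simp
  ultimately show ?case using Suc.IH by simp
qed

lemma lr_vec_low_digits:
  assumes q: "q \<ge> 2" and M: "\<And>i. i < q \<Longrightarrow> M i \<in> carrier_mat d d"
    and v: "v \<in> carrier_vec d" and z: "zero_insensitive M v"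
  shows "b < q ^ k \<Longrightarrow> lr_vec q M v (q ^ k * c + b) = digit_prod q M d k b *\<^sub>v lr_vec q M v c"
proof (induction k arbitrary: b)
  case 0
  then show ?case using lr_vec_carrier[OF v M] by simp
next
  case (Suc k)
  have i: "b mod q < q" using q by auto
  have "b div q < q ^ k" using Suc.prems q by (simp add: less_mult_imp_div_less mult.commute)
  have "q ^ Suc k * c + b = q * (q ^ k * c + b div q) + b mod q"
    using div_mult_mod_eq[of b q] by (simp add: algebra_simps)
  then have "lr_vec q M v (q ^ Suc k * c + b) = M (b mod q) *\<^sub>v lr_vec q M v (q ^ k * c + b div q)"
    using lr_vec_digit[OF q i z] by simp
  also have "\<dots> = M (b mod q) *\<^sub>v (digit_prod q M d k (b div q) *\<^sub>v lr_vec q M v c)"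
    using Suc.IH[OF \<open>b div q < q ^ k\<close>] by simp
  also have "\<dots> = digit_prod q M d (Suc k) b *\<^sub>v lr_vec q M v c"
    using assoc_mult_mat_vec[OF M[OF i] digit_prod_carrier[OF q M] lr_vec_carrier[OF v M]] by simp
  finally show ?case .
qed

lemma outer_prod_mult_vec:
  fixes u v w :: "'a::comm_semiring_0 vec"
  assumes "u \<in> carrier_vec d" "w \<in> carrier_vec d"
  shows "outer_prod v u *\<^sub>v w = (u \<bullet> w) \<cdot>\<^sub>v v"
  using assms unfolding outer_prod_def
  by (intro eq_vecI) (auto simp: scalar_prod_def sum_distrib_left ac_simps)

lemma linrep_concat:
  fixes f :: "nat \<Rightarrow> 'a::comm_semiring_1"
  assumes q: "q \<ge> 2" and rep: "is_linrep q f d u M v" and z: "zero_insensitive M v"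
    and b: "b < q ^ k"
  shows "f (q ^ (k + r) * a + b) = u \<bullet> (digit_prod q M d k b *\<^sub>v (M 0 ^\<^sub>m r *\<^sub>v lr_vec q M v a))"
proof -
  from rep have v: "v \<in> carrier_vec d" and M: "\<And>i. i < q \<Longrightarrow> M i \<in> carrier_mat d d"
    and f: "\<And>n. f n = u \<bullet> lr_vec q M v n"
    unfolding is_linrep_def by auto
  have "lr_vec q M v (q ^ (k + r) * a + b) = digit_prod q M d k b *\<^sub>v lr_vec q M v (q ^ r * a + 0)"
    using lr_vec_low_digits[OF q M v z b] by (simp add: power_add mult.assoc)
  also have "lr_vec q M v (q ^ r * a + 0) = M 0 ^\<^sub>m r *\<^sub>v lr_vec q M v a"
    using lr_vec_low_digits[OF q M v z, of 0 r a] M q by (simp add: digit_prod_zero)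
  finally show ?thesis using f by simp
qed

lemma linrep_product:
  fixes f :: "nat \<Rightarrow> 'a::field"
  assumes q: "q \<ge> 2" and rep: "is_linrep q f d u M v" and z: "zero_insensitive M v"
    and b: "b < q ^ k"
  shows "f a * f b = u \<bullet> (digit_prod q M d k b *\<^sub>v (outer_prod v u *\<^sub>v lr_vec q M v a))"
proof -
  from rep have u: "u \<in> carrier_vec d" and v: "v \<in> carrier_vec d"
    and M: "\<And>i. i < q \<Longrightarrow> M i \<in> carrier_mat d d" and f: "\<And>n. f n = u \<bullet> lr_vec q M v n"
    unfolding is_linrep_def by auto
  have P: "digit_prod q M d k b \<in> carrier_mat d d" using digit_prod_carrier[OF q M] .
  have "digit_prod q M d k b *\<^sub>v v = lr_vec q M v b"
    using lr_vec_low_digits[OF q M v z b, of 0] by (simp add: lr_vec.simps)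
  then show ?thesis
    using outer_prod_mult_vec[OF u lr_vec_carrier[OF v M]] P u v f lr_vec_carrier[OF v M]
    by (simp add: mult_mat_vec)
qed

lemma scalar_prod_mat_of_cols_eq_0:
  fixes w :: "'a::comm_ring_1 vec"
  assumes w: "w \<in> carrier_vec d" and bs: "set bs \<subseteq> carrier_vec d"
    and orth: "\<And>b. b \<in> set bs \<Longrightarrow> w \<bullet> b = 0" and c: "c \<in> carrier_vec (length bs)"
  shows "w \<bullet> (mat_of_cols d bs *\<^sub>v c) = 0"
proof -
  have B: "mat_of_cols d bs \<in> carrier_mat d (length bs)" by simp
  have "transpose_mat (mat_of_cols d bs) *\<^sub>v w = 0\<^sub>v (length bs)"
  proof (rule eq_vecI)
    fix j assume "j < dim_vec (0\<^sub>v (length bs) :: 'a vec)"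
    then have j: "j < length bs" by simp
    then have "bs ! j \<in> carrier_vec d" using bs by auto
    then have "(transpose_mat (mat_of_cols d bs) *\<^sub>v w) $ j = bs ! j \<bullet> w"
      using j by simp
    also have "\<dots> = 0" using j w orth comm_scalar_prod[OF \<open>bs ! j \<in> carrier_vec d\<close> w] by auto
    finally show "(transpose_mat (mat_of_cols d bs) *\<^sub>v w) $ j = 0\<^sub>v (length bs) $ j" using j by simp
  qed simp
  then show ?thesis using transpose_vec_mult_scalar[OF B c w] c by simp
qed

lemma exists_spanning_sublist:
  fixes G :: "'a::field vec set"
  assumes G: "G \<subseteq> carrier_vec d"
  obtains bs where "set bs \<subseteq> G" "\<And>g. g \<in> G \<Longrightarrow> \<exists>c\<in>carrier_vec (length bs). g = mat_of_cols d bs *\<^sub>v c"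
    and "length bs < d \<or> (\<forall>y\<in>carrier_vec d. \<exists>c\<in>carrier_vec (length bs). y = mat_of_cols d bs *\<^sub>v c)"
proof -
  interpret vec_space "TYPE('a)" d .
  let ?P = "\<lambda>S. S \<subseteq> G \<and> lin_indpt S"
  have bnd: "finite A \<and> card A \<le> d" if "?P A" for A
    using li_le_dim[of A] that G dim_is_n by auto
  have "?P {}" by (simp add: lin_dep_def)
  then obtain A where A: "finite A" "maximal A ?P"
    using maximal_exists[of ?P d "{}", OF bnd] by blast
  have AG: "A \<subseteq> G" and li: "lin_indpt A" using A(2) unfolding maximal_def by auto
  have AC: "A \<subseteq> carrier_vec d" using AG G by auto
  have span: "g \<in> span A" if g: "g \<in> G" for g
  proof (rule ccontr)
    assume g_out: "g \<notin> span A"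
    then have "g \<notin> A" using in_own_span[OF AC] by auto
    have "lin_indpt (A \<union> {g})" using lin_dep_iff_in_span[OF AC li _ \<open>g \<notin> A\<close>] g G g_out by auto
    then have "A \<union> {g} = A" using A(2) AG g unfolding maximal_def by blast
    then show False using \<open>g \<notin> A\<close> by auto
  qed
  obtain bs where bs: "set bs = A" "distinct bs" using finite_distinct_list[OF A(1)] by blast
  have len: "length bs = card A" using bs distinct_card by metis
  have rep: "\<exists>c\<in>carrier_vec (length bs). y = mat_of_cols d bs *\<^sub>v c" if "y \<in> span A" for y
  proof -
    have "y \<in> span_list bs" using that span_list_as_span AC bs by auto
    then obtain c where "y = lincomb_list c bs" unfolding span_list_def by auto
    also have "\<dots> = mat_of_cols d bs *\<^sub>v vec (length bs) c"
      using AC bs by (intro lincomb_list_as_mat_mult) auto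
    finally show ?thesis by auto
  qed
  have "length bs < d \<or> (\<forall>y\<in>carrier_vec d. \<exists>c\<in>carrier_vec (length bs). y = mat_of_cols d bs *\<^sub>v c)"
  proof (cases "card A = d")
    case True
    then have "span A = carrier_vec d"
      using dim_li_is_basis[OF fin_dim A(1) _ li] AC dim_is_n unfolding basis_def by auto
    then show ?thesis using rep by auto
  next
    case False
    then show ?thesis using bnd[of A] AG li len by auto
  qed
  then show thesis using AG bs(1) span rep by (intro that[of bs]) auto
qed

lemma invariant_span_intertwine:
  fixes N :: "nat \<Rightarrow> 'a::comm_ring_1 mat"
  assumes G: "G \<subseteq> carrier_vec d" and N: "\<And>i. i < q \<Longrightarrow> N i \<in> carrier_mat d d"
    and inv: "\<And>i g. i < q \<Longrightarrow> g \<in> G \<Longrightarrow> N i *\<^sub>v g \<in> G"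
    and bsG: "set bs \<subseteq> G"
    and rep: "\<And>g. g \<in> G \<Longrightarrow> \<exists>c\<in>carrier_vec (length bs). g = mat_of_cols d bs *\<^sub>v c"
  obtains A where "\<And>i. i < q \<Longrightarrow> A i \<in> carrier_mat (length bs) (length bs)"
    and "\<And>i. i < q \<Longrightarrow> N i * mat_of_cols d bs = mat_of_cols d bs * A i"
proof -
  let ?e = "length bs" and ?B = "mat_of_cols d bs"
  define coord where "coord g = (SOME c. c \<in> carrier_vec ?e \<and> g = ?B *\<^sub>v c)" for g
  have coord: "coord g \<in> carrier_vec ?e \<and> g = ?B *\<^sub>v coord g" if "g \<in> G" for g
  proof -
    have "\<exists>c. c \<in> carrier_vec ?e \<and> g = ?B *\<^sub>v c" using rep[OF that] by blast
    from someI_ex[OF this] show ?thesis unfolding coord_def .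
  qed
  define A where "A i = mat_of_cols ?e (map (\<lambda>b. coord (N i *\<^sub>v b)) bs)" for i
  have A: "A i \<in> carrier_mat ?e ?e" for i unfolding A_def by auto
  have "N i * ?B = ?B * A i" if i: "i < q" for i
  proof (rule mat_col_eqI)
    fix j assume "j < dim_col (?B * A i)"
    then have j: "j < ?e" using A[of i] by auto
    have bj: "bs ! j \<in> G" using bsG j by auto
    then have NG: "N i *\<^sub>v bs ! j \<in> G" using inv[OF i] by blast
    have "col (N i * ?B) j = N i *\<^sub>v col ?B j" using col_mult2[OF N[OF i] mat_of_cols_carrier(1) j] .
    also have "col ?B j = bs ! j" using j bj G by auto
    also have "N i *\<^sub>v bs ! j = ?B *\<^sub>v coord (N i *\<^sub>v bs ! j)" using coord[OF NG] by blast
    also have "coord (N i *\<^sub>v bs ! j) = col (A i) j" unfolding A_def using j coord[OF NG] by auto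
    also have "?B *\<^sub>v col (A i) j = col (?B * A i) j" using col_mult2[OF mat_of_cols_carrier(1) A j] ..
    finally show "col (N i * ?B) j = col (?B * A i) j" .
  qed (use N[OF i] A[of i] in auto)
  then show thesis using that A by blast
qed

lemma orthogonal_invariant_set_compression:
  fixes N :: "nat \<Rightarrow> 'a::field mat"
  assumes G: "G \<subseteq> carrier_vec d" and N: "\<And>i. i < q \<Longrightarrow> N i \<in> carrier_mat d d"
    and inv: "\<And>i g. i < q \<Longrightarrow> g \<in> G \<Longrightarrow> N i *\<^sub>v g \<in> G"
    and w: "w \<in> carrier_vec d" "w \<noteq> 0\<^sub>v d" and orth: "\<And>g. g \<in> G \<Longrightarrow> w \<bullet> g = 0"
  obtains e B A where "e < d" "B \<in> carrier_mat d e"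
    and "\<And>i. i < q \<Longrightarrow> A i \<in> carrier_mat e e" "\<And>i. i < q \<Longrightarrow> N i * B = B * A i"
    and "\<And>g. g \<in> G \<Longrightarrow> \<exists>c\<in>carrier_vec e. g = B *\<^sub>v c"
proof -
  obtain bs where bsG: "set bs \<subseteq> G"
    and rep: "\<And>g. g \<in> G \<Longrightarrow> \<exists>c\<in>carrier_vec (length bs). g = mat_of_cols d bs *\<^sub>v c"
    and small: "length bs < d \<or> (\<forall>y\<in>carrier_vec d. \<exists>c\<in>carrier_vec (length bs). y = mat_of_cols d bs *\<^sub>v c)"
    by (rule exists_spanning_sublist[OF G]) auto
  have "length bs < d"
  proof (rule ccontr)
    assume "\<not> length bs < d"
    then have span: "\<exists>c\<in>carrier_vec (length bs). y = mat_of_cols d bs *\<^sub>v c"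
      if "y \<in> carrier_vec d" for y using small that by blast
    have "w $ i = 0" if "i < d" for i
    proof -
      obtain c where "c \<in> carrier_vec (length bs)" "unit_vec d i = mat_of_cols d bs *\<^sub>v c"
        using span[OF unit_vec_carrier] by blast
      then have "w \<bullet> unit_vec d i = 0"
        using scalar_prod_mat_of_cols_eq_0[OF w(1) _ orth] bsG G by auto
      then show ?thesis using that by simp
    qed
    then show False using w by auto
  qed
  moreover obtain A where "\<And>i. i < q \<Longrightarrow> A i \<in> carrier_mat (length bs) (length bs)"
    and "\<And>i. i < q \<Longrightarrow> N i * mat_of_cols d bs = mat_of_cols d bs * A i"
    by (rule invariant_span_intertwine[OF G N inv bsG rep]) auto
  ultimately show thesis using rep by (intro that[of "length bs" "mat_of_cols d bs" A]) auto
qed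

lemma minimal_linrep_reachable:
  fixes M :: "nat \<Rightarrow> 'a::field mat"
  assumes q: "q \<ge> 2" and min: "minimal_linrep q f d u M v" and z: "zero_insensitive M v"
    and w: "w \<in> carrier_vec d" and orth: "\<And>n. w \<bullet> lr_vec q M v n = 0"
  shows "w = 0\<^sub>v d"
proof (rule ccontr)
  assume "w \<noteq> 0\<^sub>v d"
  from min have "is_linrep q f d u M v"
    and least: "\<And>d' u' M' v'. is_linrep q f d' u' M' v' \<Longrightarrow> d \<le> d'"
    unfolding minimal_linrep_def by auto
  then have u: "u \<in> carrier_vec d" and v: "v \<in> carrier_vec d"
    and M: "\<And>i. i < q \<Longrightarrow> M i \<in> carrier_mat d d" and f: "\<And>n. f n = u \<bullet> lr_vec q M v n"
    unfolding is_linrep_def by auto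
  let ?G = "range (lr_vec q M v)"
  have G: "?G \<subseteq> carrier_vec d" using lr_vec_carrier[OF v M] by auto
  have inv: "M i *\<^sub>v g \<in> ?G" if i: "i < q" and "g \<in> ?G" for i g
  proof -
    obtain n where "g = lr_vec q M v n" using \<open>g \<in> ?G\<close> by blast
    then have "M i *\<^sub>v g = lr_vec q M v (q * n + i)" using lr_vec_digit[OF q i z] by simp
    then show ?thesis by simp
  qed
  have orth_G: "w \<bullet> g = 0" if "g \<in> ?G" for g using that orth by auto
  obtain e B A where e: "e < d" and B: "B \<in> carrier_mat d e"
    and A: "\<And>i. i < q \<Longrightarrow> A i \<in> carrier_mat e e" and comm: "\<And>i. i < q \<Longrightarrow> M i * B = B * A i"
    and span: "\<And>g. g \<in> ?G \<Longrightarrow> \<exists>c\<in>carrier_vec e. g = B *\<^sub>v c"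
    by (rule orthogonal_invariant_set_compression[OF G M inv w \<open>w \<noteq> 0\<^sub>v d\<close> orth_G]) auto
  have "v \<in> ?G" by (metis lr_vec.simps rangeI)
  then obtain x where x: "x \<in> carrier_vec e" and vx: "v = B *\<^sub>v x" using span by blast
  have "is_linrep q f e (transpose_mat B *\<^sub>v u) A x"
    unfolding is_linrep_def
  proof (intro conjI allI impI)
    fix n
    have "lr_vec q M v n = B *\<^sub>v lr_vec q A x n"
      unfolding vx using lr_vec_intertwine[OF B A M _ x] comm by simp
    then show "f n = (transpose_mat B *\<^sub>v u) \<bullet> lr_vec q A x n"
      using f transpose_vec_mult_scalar[OF B lr_vec_carrier[OF x A] u] by simp
  qed (use B u x A in auto)
  then show False using least e by fastforce
qed

definition observation_vectors :: "nat \<Rightarrow> (nat \<Rightarrow> 'a::comm_semiring_1 mat) \<Rightarrow> nat \<Rightarrow> 'a vec \<Rightarrow> 'a vec set" where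
  "observation_vectors q M d u = {transpose_mat (digit_prod q M d k b) *\<^sub>v u | k b. b < q ^ k}"

lemma observation_vectors_closed:
  assumes q: "q \<ge> 2" and M: "\<And>i. i < q \<Longrightarrow> M i \<in> carrier_mat d d" and u: "u \<in> carrier_vec d"
    and i: "i < q" and g: "g \<in> observation_vectors q M d u"
  shows "transpose_mat (M i) *\<^sub>v g \<in> observation_vectors q M d u"
proof -
  obtain k b where b: "b < q ^ k" and g: "g = transpose_mat (digit_prod q M d k b) *\<^sub>v u"
    using g unfolding observation_vectors_def by blast
  have P: "digit_prod q M d k b \<in> carrier_mat d d" using digit_prod_carrier[OF q M] .
  have "transpose_mat (M i) *\<^sub>v g = (transpose_mat (M i) * transpose_mat (digit_prod q M d k b)) *\<^sub>v u"
    unfolding g using assoc_mult_mat_vec[of "transpose_mat (M i)" d d _ d u] P M[OF i] u by simp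
  also have "\<dots> = transpose_mat (digit_prod q M d k b * M i) *\<^sub>v u"
    using transpose_mult[OF P M[OF i]] by simp
  also have "\<dots> = transpose_mat (digit_prod q M d (Suc k) (b + q ^ k * i)) *\<^sub>v u"
    using digit_prod_snoc[where M = M, OF q M i b] by simp
  finally have Mg: "transpose_mat (M i) *\<^sub>v g = transpose_mat (digit_prod q M d (Suc k) (b + q ^ k * i)) *\<^sub>v u" .
  have "b + q ^ k * i < q ^ k * (i + 1)" using b by simp
  also have "\<dots> \<le> q ^ k * q" using i by (intro mult_le_mono2) simp
  finally have "b + q ^ k * i < q ^ Suc k" by (simp add: mult.commute)
  with Mg show ?thesis unfolding observation_vectors_def by blast
qed

lemma minimal_linrep_observable:
  fixes M :: "nat \<Rightarrow> 'a::field mat"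
  assumes q: "q \<ge> 2" and min: "minimal_linrep q f d u M v"
    and w: "w \<in> carrier_vec d" and orth: "\<And>k b. b < q ^ k \<Longrightarrow> u \<bullet> (digit_prod q M d k b *\<^sub>v w) = 0"
  shows "w = 0\<^sub>v d"
proof (rule ccontr)
  assume "w \<noteq> 0\<^sub>v d"
  from min have "is_linrep q f d u M v"
    and least: "\<And>d' u' M' v'. is_linrep q f d' u' M' v' \<Longrightarrow> d \<le> d'"
    unfolding minimal_linrep_def by auto
  then have u: "u \<in> carrier_vec d" and v: "v \<in> carrier_vec d"
    and M: "\<And>i. i < q \<Longrightarrow> M i \<in> carrier_mat d d" and f: "\<And>n. f n = u \<bullet> lr_vec q M v n"
    unfolding is_linrep_def by auto
  have P: "\<And>k b. digit_prod q M d k b \<in> carrier_mat d d" using digit_prod_carrier[OF q M] .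
  have Mt: "\<And>i. i < q \<Longrightarrow> transpose_mat (M i) \<in> carrier_mat d d" using M by simp
  let ?G = "observation_vectors q M d u"
  have Pt: "\<And>k b. transpose_mat (digit_prod q M d k b) \<in> carrier_mat d d" using P by simp
  have G: "?G \<subseteq> carrier_vec d"
    using mult_mat_vec_carrier[OF Pt u] unfolding observation_vectors_def by auto
  note inv = observation_vectors_closed[OF q M u]
  have orth_G: "w \<bullet> g = 0" if "g \<in> ?G" for g
  proof -
    obtain k b where b: "b < q ^ k" and g: "g = transpose_mat (digit_prod q M d k b) *\<^sub>v u"
      using \<open>g \<in> ?G\<close> unfolding observation_vectors_def by blast
    have "w \<bullet> g = g \<bullet> w" using comm_scalar_prod[OF w] G \<open>g \<in> ?G\<close> by auto
    also have "\<dots> = u \<bullet> (digit_prod q M d k b *\<^sub>v w)"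
      unfolding g using transpose_vec_mult_scalar[OF P w u] .
    finally show ?thesis using orth[OF b] by simp
  qed
  obtain e B A where e: "e < d" and B: "B \<in> carrier_mat d e"
    and A: "\<And>i. i < q \<Longrightarrow> A i \<in> carrier_mat e e"
    and comm: "\<And>i. i < q \<Longrightarrow> transpose_mat (M i) * B = B * A i"
    and span: "\<And>g. g \<in> ?G \<Longrightarrow> \<exists>c\<in>carrier_vec e. g = B *\<^sub>v c"
    by (rule orthogonal_invariant_set_compression[OF G Mt inv w \<open>w \<noteq> 0\<^sub>v d\<close> orth_G]) auto
  have "u \<in> ?G" using u unfolding observation_vectors_def by (intro CollectI exI[of _ 0]) auto
  then obtain x where x: "x \<in> carrier_vec e" and ux: "u = B *\<^sub>v x" using span by blast
  have Bt: "transpose_mat B \<in> carrier_mat e d" using B by simp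
  have At: "\<And>i. i < q \<Longrightarrow> transpose_mat (A i) \<in> carrier_mat e e" using A by simp
  have comm_t: "transpose_mat B * M i = transpose_mat (A i) * transpose_mat B" if i: "i < q" for i
    using arg_cong[OF comm[OF i], of transpose_mat] transpose_mult[OF Mt[OF i] B]
      transpose_mult[OF B A[OF i]] M[OF i] by simp
  have "is_linrep q f e x (\<lambda>i. transpose_mat (A i)) (transpose_mat B *\<^sub>v v)"
    unfolding is_linrep_def
  proof (intro conjI allI impI)
    fix n
    have "lr_vec q (\<lambda>i. transpose_mat (A i)) (transpose_mat B *\<^sub>v v) n = transpose_mat B *\<^sub>v lr_vec q M v n"
      using lr_vec_intertwine[OF Bt M At comm_t v] .
    then show "f n = x \<bullet> lr_vec q (\<lambda>i. transpose_mat (A i)) (transpose_mat B *\<^sub>v v) n"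
      using f ux transpose_vec_mult_scalar[OF Bt lr_vec_carrier[OF v M] x] by simp
  qed (use Bt v x A in auto)
  then show False using least e by fastforce
qed

lemma eq_mat_on_vecI:
  fixes A B :: "'a::semiring_1 mat"
  assumes "A \<in> carrier_mat n m" "B \<in> carrier_mat n m"
    and "\<And>y. y \<in> carrier_vec m \<Longrightarrow> A *\<^sub>v y = B *\<^sub>v y"
  shows "A = B"
proof (rule eq_matI)
  fix i j assume "i < dim_row B" "j < dim_col B"
  then have i: "i < n" and j: "j < m" using assms(2) by auto
  have entry: "C $$ (i, j) = (C *\<^sub>v unit_vec m j) $ i" if "C \<in> carrier_mat n m" for C :: "'a mat"
    using that i j by (simp add: index_mult_mat_vec)
  show "A $$ (i, j) = B $$ (i, j)" using entry[OF assms(1)] entry[OF assms(2)] assms(3) by simp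
qed (use assms in auto)

lemma minimal_linrep_separates:
  fixes A B :: "'a::field mat"
  assumes q: "q \<ge> 2" and min: "minimal_linrep q f d u M v" and z: "zero_insensitive M v"
    and A: "A \<in> carrier_mat d d" and B: "B \<in> carrier_mat d d"
    and eq: "\<And>a k b. b < q ^ k \<Longrightarrow>
      u \<bullet> (digit_prod q M d k b *\<^sub>v (A *\<^sub>v lr_vec q M v a)) = u \<bullet> (digit_prod q M d k b *\<^sub>v (B *\<^sub>v lr_vec q M v a))"
  shows "A = B"
proof -
  from min have u: "u \<in> carrier_vec d" and v: "v \<in> carrier_vec d"
    and M: "\<And>i. i < q \<Longrightarrow> M i \<in> carrier_mat d d"
    unfolding minimal_linrep_def is_linrep_def by auto
  let ?P = "digit_prod q M d" and ?D = "A - B"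
  have P: "\<And>k b. ?P k b \<in> carrier_mat d d" using digit_prod_carrier[OF q M] .
  have D: "?D \<in> carrier_mat d d" using minus_carrier_mat[OF B] A by simp
  have D_mult: "?P k b *\<^sub>v (?D *\<^sub>v x) = (?P k b * ?D) *\<^sub>v x" if "x \<in> carrier_vec d" for k b x
    using assoc_mult_mat_vec[OF P D that] by simp
  have observed: "u \<bullet> (?P k b *\<^sub>v (?D *\<^sub>v y)) = 0" if b: "b < q ^ k" and y: "y \<in> carrier_vec d" for k b y
  proof -
    have PD: "?P k b * ?D \<in> carrier_mat d d" using mult_carrier_mat[OF P D] .
    have "transpose_mat (?P k b * ?D) *\<^sub>v u = 0\<^sub>v d"
    proof (rule minimal_linrep_reachable[OF q min z])
      fix n
      have x: "lr_vec q M v n \<in> carrier_vec d" using lr_vec_carrier[OF v M] .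
      have Ax: "A *\<^sub>v lr_vec q M v n \<in> carrier_vec d" and Bx: "B *\<^sub>v lr_vec q M v n \<in> carrier_vec d"
        using A B x by auto
      have "u \<bullet> (?P k b *\<^sub>v (?D *\<^sub>v lr_vec q M v n))
          = u \<bullet> (?P k b *\<^sub>v (A *\<^sub>v lr_vec q M v n)) - u \<bullet> (?P k b *\<^sub>v (B *\<^sub>v lr_vec q M v n))"
        using minus_mult_distrib_mat_vec[OF A B x] mult_minus_distrib_mat_vec[OF P Ax Bx]
          scalar_prod_minus_distrib[OF u mult_mat_vec_carrier[OF P Ax] mult_mat_vec_carrier[OF P Bx]]
        by simp
      then have "u \<bullet> (?P k b *\<^sub>v (?D *\<^sub>v lr_vec q M v n)) = 0" using eq[OF b, of n] by simp
      then show "(transpose_mat (?P k b * ?D) *\<^sub>v u) \<bullet> lr_vec q M v n = 0"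
        using transpose_vec_mult_scalar[OF PD x u] D_mult[OF x] by simp
    qed (use PD u in simp)
    then show ?thesis using transpose_vec_mult_scalar[OF PD y u] D_mult[OF y] y by simp
  qed
  show ?thesis
  proof (rule eq_mat_on_vecI[OF A B])
    fix y :: "'a vec" assume y: "y \<in> carrier_vec d"
    have "?D *\<^sub>v y = 0\<^sub>v d"
    proof (rule minimal_linrep_observable[OF q min])
      show "?D *\<^sub>v y \<in> carrier_vec d" using D y by simp
    qed (rule observed[OF _ y])
    then have diff: "A *\<^sub>v y - B *\<^sub>v y = 0\<^sub>v d" using minus_mult_distrib_mat_vec[OF A B y] by simp
    show "A *\<^sub>v y = B *\<^sub>v y"
    proof (rule eq_vecI)
      fix i assume "i < dim_vec (B *\<^sub>v y)"
      then have "i < d" using B by simp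
      then show "(A *\<^sub>v y) $ i = (B *\<^sub>v y) $ i" using arg_cong[OF diff, of "\<lambda>x. x $ i"] A B by simp
    qed (use A B in simp)
  qed
qed

theorem theorem8:
  fixes q r d :: nat and f :: "nat \<Rightarrow> complex" and u v :: "complex vec"
    and M :: "nat \<Rightarrow> complex mat"
  assumes "q \<ge> 2"
    and "minimal_linrep q f d u M v"
    and "zero_insensitive M v"
  shows "quasimultiplicative q r f \<longleftrightarrow> M 0 ^\<^sub>m r = outer_prod v u"
proof -
  have rep: "is_linrep q f d u M v" using assms(2) unfolding minimal_linrep_def by blast
  then have "M 0 ^\<^sub>m r \<in> carrier_mat d d" "outer_prod v u \<in> carrier_mat d d"
    using assms(1) unfolding is_linrep_def outer_prod_def by auto
  moreover have "quasimultiplicative q r f \<longleftrightarrow> (\<forall>a k b. b < q ^ k \<longrightarrow>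
      u \<bullet> (digit_prod q M d k b *\<^sub>v (M 0 ^\<^sub>m r *\<^sub>v lr_vec q M v a)) =
      u \<bullet> (digit_prod q M d k b *\<^sub>v (outer_prod v u *\<^sub>v lr_vec q M v a)))"
    unfolding quasimultiplicative_def
    using linrep_concat[OF assms(1) rep assms(3)] linrep_product[OF assms(1) rep assms(3)] by auto
  ultimately show ?thesis using minimal_linrep_separates[OF assms] by auto
qed

end
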